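(* Let $n\geq 2$ and consider the clustered graph of overlapping $n$-permutations. For every cluster $X$ there exists a unique cluster $Y$ such that there are exactly two (parallel) edges from $X$ to $Y$. Moreover, there are no clusters $X,Y$ with three or more edges from $X$ to $Y$.
   Context: An $n$-permutation is a permutation $\pi_1\cdots\pi_n$ of $\{1,\ldots,n\}$. For a word $w$ of distinct numbers, $\mathrm{red}(w)$ is the permutation obtained by replacing the $i$-th smallest letter by $i$. For an $(n-1)$-permutation $\tau$, the cluster with signature $\tau$ is the set of all $n$-permutations $\pi$ with $\mathrm{red}(\pi_1\cdots\pi_{n-1})=\tau$. The clustered graph of overlapping $n$-permutations is the directed multigraph (loops allowed) whose vertices are the $(n-1)!$ clusters and in which every $n$-permutation $\pi$ contributes exactly one edge, going from the cluster containing $\pi$ to the cluster with signature $\mathrm{red}(\pi_2\cdots\pi_n)$. *)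

theory Defs
  imports Main
begin

definition perms :: "nat \<Rightarrow> nat list set" where
  "perms n = {xs. distinct xs \<and> set xs = {1..n}}"

definition red :: "nat list \<Rightarrow> nat list" where
  "red w = map (\<lambda>x. card {y \<in> set w. y \<le> x}) w"

text \<open>Clusters are identified with their signatures tau, i.e. elements of perms (n-1);
  the cluster with signature tau is the set of n-permutations pi with red(pi_1..pi_{n-1}) = tau.\<close>
definition cluster :: "nat \<Rightarrow> nat list \<Rightarrow> nat list set" where
  "cluster n tau = {pi \<in> perms n. red (butlast pi) = tau}"

text \<open>Number of edges of the clustered graph from the cluster with signature X to the
  cluster with signature Y: each n-permutation pi gives one edge from its cluster to the
  cluster with signature red(pi_2..pi_n).\<close>
definition num_edges :: "nat \<Rightarrow> nat list \<Rightarrow> nat list \<Rightarrow> nat" where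
  "num_edges n X Y = card {pi \<in> perms n. pi \<in> cluster n X \<and> red (tl pi) = Y}"

end

theory Submission
  imports Defs
begin

text \<open>Every n-permutation is obtained from the signature X of its cluster by choosing its last
  letter k and raising the letters of X that are at least k by one. Hence an edge out of the
  cluster X is determined by k, and it goes to the reduction of the word X' k, where X' is X
  without its first letter a and with the letters at least k raised. Comparing each letter of X'
  with the final letter k shows that this reduction determines which letters of X - {a} are
  below k; since X - {a} = {1..n-1} - {a}, the only two choices of k that cannot be told apart
  are k = a and k = a + 1. So each cluster has exactly one double edge and no other multiple
  edges.\<close>

definition shift_ge :: "nat \<Rightarrow> nat \<Rightarrow> nat" where
  "shift_ge k x = (if k \<le> x then x + 1 else x)"

definition extend_perm :: "nat list \<Rightarrow> nat \<Rightarrow> nat list" where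
  "extend_perm X k = map (shift_ge k) X @ [k]"

lemma card_le_in_less_iff:
  fixes S :: "nat set"
  assumes "finite S" "a \<in> S" "b \<in> S"
  shows "card {y \<in> S. y \<le> a} < card {y \<in> S. y \<le> b} \<longleftrightarrow> a < b"
proof
  assume "a < b"
  then have "{y \<in> S. y \<le> a} \<subseteq> {y \<in> S. y \<le> b}" "b \<in> {y \<in> S. y \<le> b} - {y \<in> S. y \<le> a}"
    using assms by auto
  then have "{y \<in> S. y \<le> a} \<subset> {y \<in> S. y \<le> b}" by blast
  then show "card {y \<in> S. y \<le> a} < card {y \<in> S. y \<le> b}"
    using assms by (intro psubset_card_mono) auto
next
  assume less: "card {y \<in> S. y \<le> a} < card {y \<in> S. y \<le> b}"
  show "a < b"
  proof (rule ccontr)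
    assume "\<not> a < b"
    then have "card {y \<in> S. y \<le> b} \<le> card {y \<in> S. y \<le> a}"
      using assms by (intro card_mono) auto
    then show False using less by simp
  qed
qed

lemma length_red [simp]: "length (red w) = length w"
  by (simp add: red_def)

lemma red_nth_less_iff:
  assumes "i < length w" "j < length w"
  shows "red w ! i < red w ! j \<longleftrightarrow> w ! i < w ! j"
  using assms by (simp add: red_def card_le_in_less_iff)

lemma perms_of_distinct_subset:
  assumes "distinct w" "set w \<subseteq> {1..length w}"
  shows "w \<in> perms (length w)"
proof -
  have "set w = {1..length w}"
    using assms by (intro card_subset_eq) (auto simp: distinct_card)
  then show ?thesis using assms(1) by (simp add: perms_def)
qed

lemma length_perms: "w \<in> perms m \<Longrightarrow> length w = m"
  by (auto simp: perms_def dest: distinct_card)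

lemma red_perms:
  assumes "w \<in> perms m"
  shows "red w = w"
proof -
  have set_w: "set w = {1..m}" using assms by (simp add: perms_def)
  have "{y \<in> set w. y \<le> x} = {1..x}" if "x \<in> set w" for x
    using that set_w by auto
  then show ?thesis unfolding red_def by (simp add: map_idI)
qed

lemma red_in_perms:
  assumes "distinct w"
  shows "red w \<in> perms (length w)"
proof -
  have "distinct (red w)"
  proof (subst distinct_conv_nth, intro allI impI)
    fix i j assume ij: "i < length (red w)" "j < length (red w)" "i \<noteq> j"
    then have "w ! i \<noteq> w ! j" using assms by (simp add: nth_eq_iff_index_eq)
    then have "w ! i < w ! j \<or> w ! j < w ! i" by arith
    then show "red w ! i \<noteq> red w ! j"
      using red_nth_less_iff[of i w j] red_nth_less_iff[of j w i] ij by auto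
  qed
  moreover have "set (red w) \<subseteq> {1..length w}"
  proof
    fix z assume "z \<in> set (red w)"
    then obtain x where x: "x \<in> set w" and z: "z = card {y \<in> set w. y \<le> x}"
      by (auto simp: red_def)
    have "1 \<le> z" using x unfolding z by (auto simp: Suc_le_eq card_gt_0_iff)
    moreover have "z \<le> card (set w)" unfolding z by (auto intro: card_mono)
    ultimately show "z \<in> {1..length w}" using assms by (simp add: distinct_card)
  qed
  ultimately show ?thesis using perms_of_distinct_subset[of "red w"] by simp
qed

lemma inj_on_order_embedding:
  fixes g :: "'a::order \<Rightarrow> 'b::order"
  assumes "\<And>x y. x \<in> A \<Longrightarrow> y \<in> A \<Longrightarrow> g y \<le> g x \<longleftrightarrow> y \<le> x"
  shows "inj_on g A"
proof (rule inj_onI)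
  fix x y assume "x \<in> A" "y \<in> A" "g x = g y"
  then show "x = y" using assms[of x y] assms[of y x] by (auto intro: order_antisym)
qed

lemma red_map_order_embedding:
  assumes "\<And>x y. x \<in> set w \<Longrightarrow> y \<in> set w \<Longrightarrow> g y \<le> g x \<longleftrightarrow> y \<le> x"
  shows "red (map g w) = red w"
proof -
  have inj: "inj_on g (set w)" using assms by (rule inj_on_order_embedding)
  have "card {z \<in> g ` set w. z \<le> g x} = card {y \<in> set w. y \<le> x}" if "x \<in> set w" for x
  proof -
    have "{z \<in> g ` set w. z \<le> g x} = g ` {y \<in> set w. y \<le> x}" using assms that by auto
    then show ?thesis using inj by (simp add: card_image inj_on_subset)
  qed
  then show ?thesis unfolding red_def by simp
qed

lemma extend_perm_in_perms:
  assumes "X \<in> perms m" "k \<in> {1..Suc m}"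
  shows "extend_perm X k \<in> perms (Suc m)"
proof -
  have set_X: "set X = {1..m}" and "distinct X" using assms by (auto simp: perms_def)
  moreover have "inj_on (shift_ge k) (set X)"
    by (rule inj_onI) (auto simp: shift_ge_def split: if_splits)
  ultimately have "distinct (extend_perm X k)"
    by (auto simp: extend_perm_def distinct_map shift_ge_def)
  moreover have "set (extend_perm X k) \<subseteq> {1..Suc m}"
    using set_X assms(2) by (auto simp: extend_perm_def shift_ge_def)
  ultimately show ?thesis
    using perms_of_distinct_subset[of "extend_perm X k"] length_perms[OF assms(1)]
    by (simp add: extend_perm_def)
qed

lemma butlast_last_perms:
  assumes "p \<in> perms (Suc m)"
  shows "p = butlast p @ [last p]" and "last p \<notin> set (butlast p)"
    and "distinct (butlast p)" and "insert (last p) (set (butlast p)) = {1..Suc m}"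
proof -
  have "p \<noteq> []" using length_perms[OF assms] by auto
  then have p: "butlast p @ [last p] = p" by simp
  then show "p = butlast p @ [last p]" by simp
  have "distinct (butlast p @ [last p])" "set (butlast p @ [last p]) = {1..Suc m}"
    using assms unfolding p by (auto simp: perms_def)
  then show "last p \<notin> set (butlast p)" "distinct (butlast p)"
      "insert (last p) (set (butlast p)) = {1..Suc m}"
    by simp_all
qed

lemma red_butlast_perms:
  assumes "p \<in> perms (Suc m)"
  shows "red (butlast p) = map (\<lambda>y. if y < last p then y else y - 1) (butlast p)"
    (is "_ = map ?g ?w")
proof -
  note p = butlast_last_perms[OF assms]
  have order: "?g y \<le> ?g x \<longleftrightarrow> y \<le> x" if "x \<in> set ?w" "y \<in> set ?w" for x y
  proof -
    have "x \<noteq> last p" "y \<noteq> last p" using that p(2) by auto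
    then show ?thesis by auto
  qed
  have "inj_on ?g (set ?w)" using order by (rule inj_on_order_embedding)
  then have "distinct (map ?g ?w)" using p(3) by (simp add: distinct_map)
  moreover have "set (map ?g ?w) \<subseteq> {1..length (map ?g ?w)}"
  proof
    fix z assume "z \<in> set (map ?g ?w)"
    then obtain y where y: "y \<in> set ?w" and z: "z = ?g y" by auto
    have "y \<in> {1..Suc m}" "y \<noteq> last p" "last p \<in> {1..Suc m}" using y p(2,4) by auto
    then have "z \<in> {1..m}" unfolding z by auto
    then show "z \<in> {1..length (map ?g ?w)}" using length_perms[OF assms] by simp
  qed
  ultimately have "map ?g ?w \<in> perms (length (map ?g ?w))" by (rule perms_of_distinct_subset)
  then have "red (map ?g ?w) = map ?g ?w" by (rule red_perms)
  with red_map_order_embedding[OF order] show ?thesis by (rule subst)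
qed

lemma perms_eq_extend_perm:
  assumes "p \<in> perms (Suc m)"
  shows "p = extend_perm (red (butlast p)) (last p)"
proof -
  note p = butlast_last_perms[OF assms]
  have "shift_ge (last p) (if y < last p then y else y - 1) = y" if "y \<in> set (butlast p)" for y
  proof -
    have "y \<noteq> last p" using that p(2) by auto
    then show ?thesis by (auto simp: shift_ge_def)
  qed
  then have "map (shift_ge (last p)) (red (butlast p)) = butlast p"
    unfolding red_butlast_perms[OF assms] map_map by (intro map_idI) simp
  then show ?thesis using p(1) by (simp add: extend_perm_def)
qed

lemma cluster_eq_image_extend_perm:
  assumes "X \<in> perms m"
  shows "cluster (Suc m) X = extend_perm X ` {1..Suc m}"
proof
  show "extend_perm X ` {1..Suc m} \<subseteq> cluster (Suc m) X"
  proof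
    fix p assume "p \<in> extend_perm X ` {1..Suc m}"
    then obtain k where k: "k \<in> {1..Suc m}" and p: "p = extend_perm X k" by auto
    have "red (butlast p) = red (map (shift_ge k) X)" by (simp add: p extend_perm_def)
    also have "\<dots> = X"
      using red_perms[OF assms] by (subst red_map_order_embedding) (auto simp: shift_ge_def)
    finally show "p \<in> cluster (Suc m) X"
      using extend_perm_in_perms[OF assms k] p by (simp add: cluster_def)
  qed
next
  show "cluster (Suc m) X \<subseteq> extend_perm X ` {1..Suc m}"
  proof
    fix p assume "p \<in> cluster (Suc m) X"
    then have p: "p \<in> perms (Suc m)" and "red (butlast p) = X" by (auto simp: cluster_def)
    have "p = extend_perm X (last p)"
      using perms_eq_extend_perm[OF p] unfolding \<open>red (butlast p) = X\<close> .
    moreover have "last p \<in> {1..Suc m}"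
      using butlast_last_perms(4)[OF p] by blast
    ultimately show "p \<in> extend_perm X ` {1..Suc m}" by blast
  qed
qed

lemma num_edges_eq_card:
  assumes "X \<in> perms m"
  shows "num_edges (Suc m) X Y = card {k \<in> {1..Suc m}. red (tl (extend_perm X k)) = Y}"
proof -
  have "{p \<in> perms (Suc m). p \<in> cluster (Suc m) X \<and> red (tl p) = Y}
      = {p \<in> cluster (Suc m) X. red (tl p) = Y}"
    by (auto simp: cluster_def)
  also have "\<dots> = extend_perm X ` {k \<in> {1..Suc m}. red (tl (extend_perm X k)) = Y}"
    unfolding cluster_eq_image_extend_perm[OF assms] by blast
  finally have "{p \<in> perms (Suc m). p \<in> cluster (Suc m) X \<and> red (tl p) = Y}
      = extend_perm X ` {k \<in> {1..Suc m}. red (tl (extend_perm X k)) = Y}" .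
  moreover have "inj (extend_perm X)"
    by (rule injI) (metis extend_perm_def last_snoc)
  ultimately show ?thesis unfolding num_edges_def by (simp add: card_image inj_on_subset)
qed

lemma red_snoc_Suc:
  assumes "a \<notin> set U" "a + 1 \<notin> set U"
  shows "red (U @ [a + 1]) = red (U @ [a])"
proof -
  define g where "g y = (if y = a then a + 1 else y)" for y
  have "map g (U @ [a]) = U @ [a + 1]"
    using assms(1) by (auto simp: g_def intro: map_idI)
  moreover have "red (map g (U @ [a])) = red (U @ [a])"
  proof (rule red_map_order_embedding)
    fix x y assume "x \<in> set (U @ [a])" "y \<in> set (U @ [a])"
    then have "x \<noteq> a + 1" "y \<noteq> a + 1" using assms(2) by auto
    then show "g y \<le> g x \<longleftrightarrow> y \<le> x" by (auto simp: g_def)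
  qed
  ultimately show ?thesis by simp
qed

lemma red_tl_extend_perm_hd:
  assumes "distinct X" "X \<noteq> []"
  shows "red (tl (extend_perm X (hd X + 1))) = red (tl (extend_perm X (hd X)))"
proof -
  obtain a T where X: "X = a # T" using assms(2) by (cases X) auto
  have "a \<notin> set T" using assms(1) X by simp
  then have "shift_ge (a + 1) x = shift_ge a x" if "x \<in> set T" for x
    using that by (cases "x = a") (auto simp: shift_ge_def)
  then have shift_eq: "map (shift_ge (Suc a)) T = map (shift_ge a) T" by simp
  have "a \<notin> set (map (shift_ge a) T)" "a + 1 \<notin> set (map (shift_ge a) T)"
    using \<open>a \<notin> set T\<close> by (auto simp: shift_ge_def)
  then have "red (map (shift_ge a) T @ [a + 1]) = red (map (shift_ge a) T @ [a])"
    by (rule red_snoc_Suc)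
  then show ?thesis by (simp add: X extend_perm_def shift_eq)
qed

lemma red_snoc_eq_imp_less_last_iff:
  assumes "red (U @ [k]) = red (V @ [k'])" "length U = length V" "i < length U"
  shows "U ! i < k \<longleftrightarrow> V ! i < k'"
proof -
  have "U ! i < k \<longleftrightarrow> red (U @ [k]) ! i < red (U @ [k]) ! length U"
    using red_nth_less_iff[of i "U @ [k]" "length U"] assms(3) by (simp add: nth_append)
  also have "\<dots> \<longleftrightarrow> V ! i < k'"
    using red_nth_less_iff[of i "V @ [k']" "length V"] assms by (simp add: nth_append)
  finally show ?thesis .
qed

lemma red_tl_extend_perm_eq_imp:
  assumes X: "X \<in> perms m" and k: "k \<in> {1..Suc m}" "k' \<in> {1..Suc m}" "k < k'"
    and eq: "red (tl (extend_perm X k)) = red (tl (extend_perm X k'))"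
  shows "k = hd X \<and> k' = hd X + 1"
proof -
  have "X \<noteq> []" using k length_perms[OF X] by auto
  then obtain a T where aT: "X = a # T" by (cases X) auto
  have set_T: "set T = {1..m} - {a}"
    using X by (auto simp: aT perms_def)
  have below: "x < k \<longleftrightarrow> x < k'" if x: "x \<in> set T" for x
  proof -
    obtain i where i: "i < length T" "T ! i = x" using x by (auto simp: in_set_conv_nth)
    have "shift_ge k x < k \<longleftrightarrow> shift_ge k' x < k'"
      using red_snoc_eq_imp_less_last_iff[of "map (shift_ge k) T" k "map (shift_ge k') T" k' i]
        eq i by (simp add: aT extend_perm_def)
    then show ?thesis by (auto simp: shift_ge_def split: if_splits)
  qed
  have "k = a"
  proof (rule ccontr)
    assume "k \<noteq> a"
    moreover have "k \<in> {1..m}" using k by auto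
    ultimately have "k \<in> set T" using set_T by simp
    then show False using below[of k] k(3) by simp
  qed
  moreover have "k' - 1 = a"
  proof (rule ccontr)
    assume "k' - 1 \<noteq> a"
    moreover have "k' - 1 \<in> {1..m}" using k by auto
    ultimately have "k' - 1 \<in> set T" using set_T by simp
    then show False using below[of "k' - 1"] k by simp
  qed
  ultimately show ?thesis using aT k(3) by simp
qed

lemma card_fibers_single_collision:
  assumes "finite A" "a \<in> A" "b \<in> A" "a \<noteq> b" "f a = f b"
    and collision: "\<And>x y. x \<in> A \<Longrightarrow> y \<in> A \<Longrightarrow> x \<noteq> y \<Longrightarrow> f x = f y \<Longrightarrow> {x, y} = {a, b}"
  shows "card {x \<in> A. f x = z} \<le> 2" and "card {x \<in> A. f x = z} = 2 \<longleftrightarrow> z = f a"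
proof -
  let ?F = "{x \<in> A. f x = z}"
  have card_le_1: "card ?F \<le> 1" if "?F \<subseteq> {c}" for c
    using card_mono[OF _ that] by simp
  have shape: "?F = {a, b} \<or> card ?F \<le> 1"
  proof (cases "?F \<subseteq> {a, b}")
    case True
    show ?thesis
    proof (cases "{a, b} \<subseteq> ?F")
      case False
      then have "?F \<subseteq> {a} \<or> ?F \<subseteq> {b}" using True by blast
      then show ?thesis using card_le_1 by blast
    qed (use True in blast)
  next
    case False
    then obtain c where c: "c \<in> ?F" "c \<notin> {a, b}" by blast
    have "?F \<subseteq> {c}"
    proof
      fix d assume "d \<in> ?F"
      then show "d \<in> {c}" using collision[of c d] c by (cases "c = d") auto
    qed
    then show ?thesis using card_le_1 by blast
  qed
  then show "card ?F \<le> 2" using assms(4) by auto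
  show "card ?F = 2 \<longleftrightarrow> z = f a"
  proof
    assume "card ?F = 2"
    then have "a \<in> ?F" using shape by auto
    then show "z = f a" by simp
  next
    assume "z = f a"
    then have "{a, b} \<subseteq> ?F" using assms(2,3,5) by auto
    then have "2 \<le> card ?F" using card_mono[of ?F "{a, b}"] assms(1,4) by simp
    then show "card ?F = 2" using shape assms(4) by auto
  qed
qed

lemma red_tl_extend_perm_eq_iff:
  assumes X: "X \<in> perms m" and k: "k \<in> {1..Suc m}" "k' \<in> {1..Suc m}" "k \<noteq> k'"
  shows "red (tl (extend_perm X k)) = red (tl (extend_perm X k')) \<longleftrightarrow> {k, k'} = {hd X, hd X + 1}"
proof
  assume eq: "red (tl (extend_perm X k)) = red (tl (extend_perm X k'))"
  show "{k, k'} = {hd X, hd X + 1}"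
  proof (cases "k < k'")
    case True
    then show ?thesis using red_tl_extend_perm_eq_imp[OF X k(1,2) True eq] by simp
  next
    case False
    then have "k' < k" using k(3) by simp
    then show ?thesis using red_tl_extend_perm_eq_imp[OF X k(2,1) _ eq[symmetric]] by auto
  qed
next
  assume "{k, k'} = {hd X, hd X + 1}"
  moreover have "X \<noteq> []" "distinct X" using X k length_perms[OF X] by (auto simp: perms_def)
  ultimately show "red (tl (extend_perm X k)) = red (tl (extend_perm X k'))"
    using red_tl_extend_perm_hd[of X] k(3) by (auto simp: doubleton_eq_iff)
qed

lemma hd_perms:
  assumes "X \<in> perms m" "m \<ge> 1"
  shows "hd X \<in> {1..m}"
proof -
  have "X \<noteq> []" using assms length_perms by fastforce
  then show ?thesis using assms(1) hd_in_set[of X] by (simp add: perms_def)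
qed

lemma red_tl_extend_perm_in_perms:
  assumes "X \<in> perms m" "k \<in> {1..Suc m}"
  shows "red (tl (extend_perm X k)) \<in> perms m"
proof -
  have ext: "extend_perm X k \<in> perms (Suc m)" using assms by (rule extend_perm_in_perms)
  then have "distinct (tl (extend_perm X k))" by (simp add: perms_def distinct_tl)
  moreover have "length (tl (extend_perm X k)) = m" using length_perms[OF ext] by simp
  ultimately show ?thesis using red_in_perms by fastforce
qed

lemma num_edges_from_cluster:
  assumes X: "X \<in> perms m" and "m \<ge> 1"
  shows "num_edges (Suc m) X Y \<le> 2"
    and "num_edges (Suc m) X Y = 2 \<longleftrightarrow> Y = red (tl (extend_perm X (hd X)))"
proof -
  define f where "f k = red (tl (extend_perm X k))" for k
  have a: "hd X \<in> {1..Suc m}" "hd X + 1 \<in> {1..Suc m}"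
    using hd_perms[OF assms] by auto
  have "hd X \<noteq> hd X + 1" by simp
  note collision_iff = red_tl_extend_perm_eq_iff[OF X, folded f_def]
  have hd_collision: "f (hd X) = f (hd X + 1)"
    using collision_iff[OF a \<open>hd X \<noteq> hd X + 1\<close>] by simp
  have collision_pair: "{k, k'} = {hd X, hd X + 1}"
    if "k \<in> {1..Suc m}" "k' \<in> {1..Suc m}" "k \<noteq> k'" "f k = f k'" for k k'
    using collision_iff[OF that(1-3)] that(4) by blast
  note fibers = card_fibers_single_collision[OF finite_atLeastAtMost a \<open>hd X \<noteq> hd X + 1\<close>
      hd_collision collision_pair]
  have edges: "num_edges (Suc m) X Y = card {k \<in> {1..Suc m}. f k = Y}"
    unfolding f_def by (rule num_edges_eq_card[OF X])
  show "num_edges (Suc m) X Y \<le> 2"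
    using fibers(1)[of Y] unfolding edges by blast
  show "num_edges (Suc m) X Y = 2 \<longleftrightarrow> Y = red (tl (extend_perm X (hd X)))"
    using fibers(2)[of Y] unfolding edges f_def by blast
qed

theorem lemma2:
  fixes n :: nat
  assumes "n \<ge> 2"
  shows "(\<forall>X \<in> perms (n - 1). \<exists>!Y. Y \<in> perms (n - 1) \<and> num_edges n X Y = 2)
       \<and> (\<forall>X \<in> perms (n - 1). \<forall>Y \<in> perms (n - 1). num_edges n X Y < 3)"
proof -
  obtain m where n: "n = Suc m" and "m \<ge> 1" using assms by (cases n) auto
  have "\<exists>!Y. Y \<in> perms m \<and> num_edges n X Y = 2" if X: "X \<in> perms m" for X
  proof (rule ex1I)
    let ?Y = "red (tl (extend_perm X (hd X)))"
    have two_iff: "num_edges n X Y = 2 \<longleftrightarrow> Y = ?Y" for Y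
      unfolding n by (rule num_edges_from_cluster(2)[OF X \<open>m \<ge> 1\<close>])
    have "?Y \<in> perms m"
      using red_tl_extend_perm_in_perms[OF X] hd_perms[OF X \<open>m \<ge> 1\<close>] by simp
    then show "?Y \<in> perms m \<and> num_edges n X ?Y = 2" using two_iff by simp
    show "Y = ?Y" if "Y \<in> perms m \<and> num_edges n X Y = 2" for Y
      using that two_iff by simp
  qed
  moreover have "num_edges n X Y < 3" if "X \<in> perms m" for X Y
    using num_edges_from_cluster(1)[OF that \<open>m \<ge> 1\<close>, of Y] unfolding n by linarith
  ultimately show ?thesis unfolding n diff_Suc_1 by blast
qed

end
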